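(* Let $G$ be a finite directed acyclic graph whose input nodes (the nodes with no incoming edge) are the coordinates of a vector $\bm x$, and let $o$ be any leaf node of $G$. For an input node $x$, let $\mathcal P(x,o)$ be the set of directed paths from $x$ to $o$; for a path ${\bm p}$, let $\tilde{\bm p}$ be the same path without its starting node $x$, and for a node $p$ let $d_p$ be its in-degree. Then $$\sum_{x\in\bm x}\ \sum_{{\bm p}\in\mathcal P(x,o)}\ \prod_{p\in\tilde{\bm p}}\frac{1}{d_p}=1.$$ *)

theory Defs
  imports Complex_Main
begin

definition input_nodes :: "'a set \<Rightarrow> ('a \<times> 'a) set \<Rightarrow> 'a set" where
  "input_nodes V E = {v \<in> V. \<forall>u. (u, v) \<notin> E}"

definition in_degree :: "('a \<times> 'a) set \<Rightarrow> 'a \<Rightarrow> nat" where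
  "in_degree E v = card {u. (u, v) \<in> E}"

definition dpaths :: "('a \<times> 'a) set \<Rightarrow> 'a \<Rightarrow> 'a \<Rightarrow> 'a list set" where
  "dpaths E x t = {p. p \<noteq> [] \<and> hd p = x \<and> last p = t \<and> successively (\<lambda>u v. (u, v) \<in> E) p}"

end

theory Submission
  imports Defs
begin

text \<open>Call the product of the reciprocal in-degrees along a path its weight. Grouping the paths
  ending in a node v by their last edge (u, v) shows that the total weight W v of all paths from
  input nodes to v satisfies W v = 1 for an input node and W v = (\<Sum>u. W u) / d over the d
  predecessors u of v otherwise. Well-founded induction along the acyclic edge relation then
  gives W v = 1 for every node v.\<close>

definition path_weight :: "('a \<times> 'a) set \<Rightarrow> 'a list \<Rightarrow> real" where
  "path_weight E p = (\<Prod>q\<leftarrow>tl p. 1 / real (in_degree E q))"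

lemma path_weight_singleton [simp]: "path_weight E [v] = 1"
  by (simp add: path_weight_def)

lemma path_weight_snoc:
  "p \<noteq> [] \<Longrightarrow> path_weight E (p @ [v]) = path_weight E p / real (in_degree E v)"
  by (cases p) (simp_all add: path_weight_def)

lemma dpaths_nonempty_last: "p \<in> dpaths E x v \<Longrightarrow> p \<noteq> [] \<and> last p = v"
  by (simp add: dpaths_def)

lemma dpaths_snoc_iff:
  "p @ [v] \<in> dpaths E x w \<longleftrightarrow>
     v = w \<and> (p = [] \<and> x = w \<or> p \<in> dpaths E x (last p) \<and> (last p, w) \<in> E)"
  by (cases "p = []") (auto simp: dpaths_def successively_append_iff)

lemma dpaths_by_last_edge:
  "dpaths E x v = (if x = v then {[v]} else {}) \<union>
     (\<Union>u\<in>{u. (u, v) \<in> E}. (\<lambda>p. p @ [v]) ` dpaths E x u)"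
proof (rule set_eqI)
  fix p
  show "p \<in> dpaths E x v \<longleftrightarrow> p \<in> (if x = v then {[v]} else {}) \<union>
     (\<Union>u\<in>{u. (u, v) \<in> E}. (\<lambda>p. p @ [v]) ` dpaths E x u)"
  proof (cases p rule: rev_cases)
    case Nil
    then show ?thesis by (auto simp: dpaths_def)
  next
    case (snoc q w)
    then show ?thesis
      by (auto simp: dpaths_snoc_iff dest: dpaths_nonempty_last)
  qed
qed

lemma finite_predecessors: "finite E \<Longrightarrow> finite {u. (u, v) \<in> E}"
  by (rule finite_subset[of _ "fst ` E"]) force+

lemma finite_dpaths:
  assumes "wf E" and "finite E"
  shows "finite (dpaths E x v)"
  using assms(1)
proof (induction v rule: wf_induct_rule)
  case (less v)
  then show ?case
    by (subst dpaths_by_last_edge) (simp add: finite_predecessors[OF assms(2)])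
qed

lemma sum_dpaths_by_last_edge:
  assumes "wf E" and "finite E"
  shows "(\<Sum>p\<in>dpaths E x v. f p) = (if x = v then f [v] else 0)
     + (\<Sum>u\<in>{u. (u, v) \<in> E}. \<Sum>p\<in>dpaths E x u. f (p @ [v]))"
proof -
  note fin = finite_predecessors[OF assms(2)] finite_dpaths[OF assms]
  have "(\<Sum>p\<in>dpaths E x v. f p) = sum f (if x = v then {[v]} else {}) +
     sum f (\<Union>u\<in>{u. (u, v) \<in> E}. (\<lambda>p. p @ [v]) ` dpaths E x u)"
    by (subst dpaths_by_last_edge, rule sum.union_disjoint)
      (use fin in \<open>auto dest: dpaths_nonempty_last\<close>)
  also have "sum f (\<Union>u\<in>{u. (u, v) \<in> E}. (\<lambda>p. p @ [v]) ` dpaths E x u)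
     = (\<Sum>u\<in>{u. (u, v) \<in> E}. sum f ((\<lambda>p. p @ [v]) ` dpaths E x u))"
    by (rule sum.UNION_disjoint) (use fin in \<open>auto dest!: dpaths_nonempty_last\<close>)
  also have "\<dots> = (\<Sum>u\<in>{u. (u, v) \<in> E}. \<Sum>p\<in>dpaths E x u. f (p @ [v]))"
    by (rule sum.cong[OF refl], subst sum.reindex) (auto simp: inj_on_def)
  finally show ?thesis by simp
qed

definition input_path_weight :: "'a set \<Rightarrow> ('a \<times> 'a) set \<Rightarrow> 'a \<Rightarrow> real" where
  "input_path_weight V E v = (\<Sum>x\<in>input_nodes V E. \<Sum>p\<in>dpaths E x v. path_weight E p)"

lemma input_path_weight_by_last_edge:
  assumes "finite V" and "wf E" and "finite E"
  shows "input_path_weight V E v = (if v \<in> input_nodes V E then 1 else 0)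
     + (\<Sum>u\<in>{u. (u, v) \<in> E}. input_path_weight V E u) / real (in_degree E v)"
proof -
  have "finite (input_nodes V E)"
    using assms(1) by (simp add: input_nodes_def)
  have snoc: "(\<Sum>p\<in>dpaths E x u. path_weight E (p @ [v]))
      = (\<Sum>p\<in>dpaths E x u. path_weight E p / real (in_degree E v))" for x u
    by (rule sum.cong[OF refl]) (simp add: path_weight_snoc dpaths_nonempty_last)
  have "input_path_weight V E v = (\<Sum>x\<in>input_nodes V E. if x = v then 1 else 0)
     + (\<Sum>x\<in>input_nodes V E. \<Sum>u\<in>{u. (u, v) \<in> E}. \<Sum>p\<in>dpaths E x u.
          path_weight E p / real (in_degree E v))"
    unfolding input_path_weight_def sum.distrib[symmetric]
    by (rule sum.cong[OF refl])
      (simp add: sum_dpaths_by_last_edge[OF assms(2,3), where v = v] snoc)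
  also have "\<dots> = (if v \<in> input_nodes V E then 1 else 0)
     + (\<Sum>u\<in>{u. (u, v) \<in> E}. input_path_weight V E u) / real (in_degree E v)"
    using \<open>finite (input_nodes V E)\<close>
    by (simp add: input_path_weight_def sum_divide_distrib sum.swap[of _ "input_nodes V E"])
  finally show ?thesis .
qed

lemma input_path_weight_eq_1:
  assumes "finite V" and "E \<subseteq> V \<times> V" and "wf E" and "v \<in> V"
  shows "input_path_weight V E v = 1"
  using assms(3,4)
proof (induction v rule: wf_induct_rule)
  case (less v)
  have "finite E"
    using assms(1,2) finite_subset by blast
  have preds: "input_path_weight V E u = 1" if "(u, v) \<in> E" for u
    using less.IH that assms(2) by blast
  show ?case
  proof (cases "v \<in> input_nodes V E")
    case True
    then have "in_degree E v = 0"
      by (simp add: in_degree_def input_nodes_def)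
    with True show ?thesis
      using input_path_weight_by_last_edge[OF assms(1,3) \<open>finite E\<close>, of v] by simp
  next
    case False
    then have "in_degree E v > 0"
      using less.prems finite_predecessors[OF \<open>finite E\<close>]
      by (auto simp: in_degree_def input_nodes_def card_gt_0_iff)
    with False show ?thesis
      using input_path_weight_by_last_edge[OF assms(1,3) \<open>finite E\<close>, of v]
      by (simp add: preds in_degree_def)
  qed
qed

theorem lemma2:
  fixes V :: "'a set" and E :: "('a \<times> 'a) set" and t :: 'a
  assumes "finite V"
    and "E \<subseteq> V \<times> V"
    and "\<forall>v. (v, v) \<notin> E\<^sup>+"
    and "t \<in> V"
    and "\<forall>w. (t, w) \<notin> E"
  shows "(\<Sum>x\<in>input_nodes V E. \<Sum>p\<in>dpaths E x t.
            (\<Prod>q\<leftarrow>tl p. 1 / real (in_degree E q))) = 1"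
proof -
  have "finite E"
    using assms(1,2) finite_subset by blast
  then have "wf E"
    using finite_acyclic_wf assms(3) by (simp add: acyclic_def)
  then have "input_path_weight V E t = 1"
    by (rule input_path_weight_eq_1[OF assms(1,2) _ assms(4)])
  then show ?thesis
    by (simp add: input_path_weight_def path_weight_def)
qed

end
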